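(* Let $1\le k<d$, $\mu>0$, $u\in\mathbb{R}^d$ with $u_1\ge\cdots\ge u_d\ge0$, $\bar u_i=u_i/(1+\mu)$ for $i\in[k]$, and let $\tilde x=\mathrm{argmin}_{x\in\mathbb{R}^d}\{\mu\|x\|_{k,2}^2+\|x-u\|^2\}$. Then there exist indices $j_s\in\{1,\dots,k\}$, $j_e\in\{k,\dots,d\}$ and a number $\xi$ with $u_{j_e+1}\le\xi\le\bar u_{j_s-1}$ (with the conventions $\bar u_0=+\infty$, $u_{d+1}=0$) such that $$\tilde x=(\bar u_1,\dots,\bar u_{j_s-1},\underbrace{\xi,\dots,\xi}_{\text{positions } j_s,\dots,j_e},u_{j_e+1},\dots,u_d)^\top .$$ Moreover, for arbitrary $v\in\mathbb{R}^d$, if $u=\sigma(|v|)$ where $|v|=(|v_1|,\dots,|v_d|)$ and $\sigma$ is a permutation of coordinates sorting $|v|$ in non-increasing order, then $\mathrm{prox}_{\frac{\mu}{2}\|\cdot\|_{k,2}^2}(v)=\mathrm{sign}(v)\odot\sigma^{-1}(\tilde x)$.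
   Context: $\|\cdot\|$ is the Euclidean norm. For $z\in\mathbb{R}^m$ and integer $j\ge0$, $\|z\|_{j,2}$ is the Euclidean norm of the vector obtained from $z$ by keeping (up to) $j$ entries of largest absolute value and setting the others to $0$. For convex $g$, $\mathrm{prox}_g(x)=\mathrm{argmin}_y\{g(y)+\frac12\|x-y\|^2\}$. $\mathrm{sign}(v)\in\{-1,1\}^d$ has $i$th entry $1$ if $v_i\ge0$ and $-1$ otherwise; $\odot$ is the entrywise product; $\sigma$ and $\sigma^{-1}$ act on vectors by permuting coordinates, with $\sigma^{-1}(\sigma(x))=x$. *)

theory Defs
  imports Complex_Main
begin

text \<open>Vectors of R^d are functions nat => real, coordinates 1..d, zero elsewhere.\<close>
definition vecs :: "nat \<Rightarrow> (nat \<Rightarrow> real) set" where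
  "vecs d = {x. \<forall>i. i \<notin> {1..d} \<longrightarrow> x i = 0}"

definition enorm :: "nat \<Rightarrow> (nat \<Rightarrow> real) \<Rightarrow> real" where
  "enorm d z = sqrt (\<Sum>i=1..d. (z i)^2)"

definition topk_norm :: "nat \<Rightarrow> nat \<Rightarrow> (nat \<Rightarrow> real) \<Rightarrow> real" where
  "topk_norm d j z = Max ((\<lambda>S. sqrt (\<Sum>i\<in>S. (z i)^2)) ` {S. S \<subseteq> {1..d} \<and> card S \<le> j})"

definition minimizers :: "('a \<Rightarrow> real) \<Rightarrow> 'a set \<Rightarrow> 'a set" where
  "minimizers F A = {x \<in> A. \<forall>y \<in> A. F x \<le> F y}"

text \<open>prox_g(v) as the set of minimizers (a singleton for the convex g used here).\<close>
definition prox_set :: "nat \<Rightarrow> ((nat \<Rightarrow> real) \<Rightarrow> real) \<Rightarrow> (nat \<Rightarrow> real) \<Rightarrow> (nat \<Rightarrow> real) set" where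
  "prox_set d g v = minimizers (\<lambda>y. g y + 1/2 * (enorm d (\<lambda>i. v i - y i))^2) (vecs d)"

definition sign_of :: "real \<Rightarrow> real" where
  "sign_of t = (if t \<ge> 0 then 1 else -1)"

end

theory Submission
  imports Defs "HOL-Analysis.Analysis"
begin

(*
  The objective mu ||x||_{k,2}^2 + ||x - u||^2 is strongly convex, because the squared top-k norm
  is midpoint convex, so it has at most one minimizer and it suffices to exhibit one of the stated
  shape.  The level xi is a root, found by the intermediate value theorem, of
  sum_i max 0 (min (u_i - xi) (mu xi)) = k mu xi, and js, je delimit the entries of u lying in
  [xi, (1 + mu) xi].  The resulting candidate x is certified optimal by the dual bound
  <y, u - x> <= mu ||x||_{k,2} ||y||_{k,2}, with equality at y = x.  The prox formula for a general
  v follows because the objective is invariant under signed permutations of the coordinates.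
*)

lemma finite_topk_supports: "finite {S. S \<subseteq> {1..d::nat} \<and> card S \<le> k}"
  by (rule finite_subset[of _ "Pow {1..d}"]) auto

lemma topk_norm_altdef: "topk_norm d k z = Max (L2_set z ` {S. S \<subseteq> {1..d} \<and> card S \<le> k})"
  by (simp add: topk_norm_def L2_set_def)

lemma L2_set_le_topk_norm:
  assumes "S \<subseteq> {1..d}" "card S \<le> k"
  shows "L2_set z S \<le> topk_norm d k z"
  unfolding topk_norm_altdef by (rule Max_ge) (use finite_topk_supports assms in auto)

lemma topk_norm_attained:
  obtains S where "S \<subseteq> {1..d}" "card S \<le> k" "topk_norm d k z = L2_set z S"
proof -
  have "topk_norm d k z \<in> L2_set z ` {S. S \<subseteq> {1..d} \<and> card S \<le> k}"
    unfolding topk_norm_altdef by (rule Max_in) (use finite_topk_supports in auto)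
  then show ?thesis using that by auto
qed

lemma power2_L2_set: "(L2_set f A)^2 = (\<Sum>i\<in>A. (f i)^2)"
  by (simp add: L2_set_def sum_nonneg)

lemma power2_enorm: "(enorm d z)^2 = (\<Sum>i=1..d. (z i)^2)"
  unfolding enorm_def by (simp add: sum_nonneg)

lemma power2_topk_norm_midpoint:
  "(topk_norm d k (\<lambda>i. (x i + y i)/2))^2 \<le> ((topk_norm d k x)^2 + (topk_norm d k y)^2)/2"
proof -
  obtain S where S: "S \<subseteq> {1..d}" "card S \<le> k"
    and attained: "topk_norm d k (\<lambda>i. (x i + y i)/2) = L2_set (\<lambda>i. (x i + y i)/2) S"
    by (rule topk_norm_attained)
  have "(\<Sum>i\<in>S. ((x i + y i)/2)^2) \<le> (\<Sum>i\<in>S. ((x i)^2 + (y i)^2)/2)"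
  proof (rule sum_mono)
    fix i show "((x i + y i)/2)^2 \<le> ((x i)^2 + (y i)^2)/2"
      using sum_squares_ge_zero[of "x i - y i" 0] by (simp add: power2_eq_square field_simps)
  qed
  also have "\<dots> = ((L2_set x S)^2 + (L2_set y S)^2)/2"
    by (simp add: power2_L2_set sum.distrib[symmetric] sum_divide_distrib)
  also have "\<dots> \<le> ((topk_norm d k x)^2 + (topk_norm d k y)^2)/2"
    using L2_set_le_topk_norm[OF S, of x] L2_set_le_topk_norm[OF S, of y]
    by (intro divide_right_mono add_mono power_mono) auto
  finally show ?thesis by (simp add: attained power2_L2_set)
qed

lemma minimizer_midpoint_convex_add_sqdist_unique:
  fixes g :: "(nat \<Rightarrow> real) \<Rightarrow> real"
  assumes g: "\<And>x y. g (\<lambda>i. (x i + y i)/2) \<le> (g x + g y)/2"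
    and x: "x \<in> minimizers (\<lambda>x. g x + (enorm d (\<lambda>i. x i - w i))^2) (vecs d)"
    and y: "y \<in> minimizers (\<lambda>x. g x + (enorm d (\<lambda>i. x i - w i))^2) (vecs d)"
  shows "x = y"
proof -
  define F where "F = (\<lambda>x. g x + (\<Sum>i=1..d. (x i - w i)^2))"
  define m where "m = (\<lambda>i. (x i + y i)/2)"
  define D where "D = (\<Sum>i=1..d. (x i - y i)^2)"
  have xv: "x \<in> vecs d" and yv: "y \<in> vecs d" using x y by (auto simp: minimizers_def)
  then have "m \<in> vecs d" by (auto simp: vecs_def m_def)
  then have "F x \<le> F m" "F y \<le> F m"
    using x y by (auto simp: minimizers_def F_def power2_enorm)
  have parallelogram: "(\<Sum>i=1..d. (m i - w i)^2)
      = ((\<Sum>i=1..d. (x i - w i)^2) + (\<Sum>i=1..d. (y i - w i)^2))/2 - D/4"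
    unfolding m_def D_def
    by (simp add: sum_divide_distrib sum.distrib[symmetric] sum_subtractf[symmetric])
       (rule sum.cong, simp, simp add: power2_eq_square field_simps)
  have "F m \<le> (F x + F y)/2 - D/4"
    using g[of x y] parallelogram unfolding F_def m_def by argo
  with \<open>F x \<le> F m\<close> \<open>F y \<le> F m\<close> have "D \<le> 0"
    by argo
  then have "\<forall>i\<in>{1..d}. (x i - y i)^2 = 0"
    unfolding D_def by (subst sum_nonneg_eq_0_iff[symmetric]) (auto intro!: antisym sum_nonneg)
  then show ?thesis using xv yv by (auto simp: vecs_def fun_eq_iff)
qed

lemma topk_objective_minimizer_unique:
  fixes \<mu> :: real
  assumes "\<mu> \<ge> 0"
    and "x \<in> minimizers (\<lambda>x. \<mu> * (topk_norm d k x)^2 + (enorm d (\<lambda>i. x i - w i))^2) (vecs d)"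
    and "y \<in> minimizers (\<lambda>x. \<mu> * (topk_norm d k x)^2 + (enorm d (\<lambda>i. x i - w i))^2) (vecs d)"
  shows "x = y"
proof (rule minimizer_midpoint_convex_add_sqdist_unique[OF _ assms(2,3)])
  fix x y :: "nat \<Rightarrow> real"
  show "\<mu> * (topk_norm d k (\<lambda>i. (x i + y i)/2))^2 \<le> (\<mu> * (topk_norm d k x)^2 + \<mu> * (topk_norm d k y)^2)/2"
    using mult_left_mono[OF power2_topk_norm_midpoint \<open>\<mu> \<ge> 0\<close>] by (simp add: field_simps)
qed

lemma minimizer_of_dual_certificate:
  fixes g :: "(nat \<Rightarrow> real) \<Rightarrow> real" and \<mu> :: real
  assumes "\<mu> \<ge> 0" and "x \<in> vecs d"
    and inner_x: "(\<Sum>i=1..d. x i * (u i - x i)) = \<mu> * (g x)^2"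
    and inner_le: "\<And>y. (\<Sum>i=1..d. y i * (u i - x i)) \<le> \<mu> * g x * g y"
  shows "x \<in> minimizers (\<lambda>x. \<mu> * (g x)^2 + (enorm d (\<lambda>i. x i - u i))^2) (vecs d)"
proof -
  have "\<mu> * (g x)^2 + (\<Sum>i=1..d. (x i - u i)^2) \<le> \<mu> * (g y)^2 + (\<Sum>i=1..d. (y i - u i)^2)" for y
  proof -
    have "(\<Sum>i=1..d. (y i - u i)^2) = (\<Sum>i=1..d. (x i - u i)^2 + (y i - x i)^2
        - 2 * (y i * (u i - x i)) + 2 * (x i * (u i - x i)))"
      by (rule sum.cong) (auto simp: power2_eq_square algebra_simps)
    also have "\<dots> = (\<Sum>i=1..d. (x i - u i)^2) + (\<Sum>i=1..d. (y i - x i)^2)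
        - 2 * (\<Sum>i=1..d. y i * (u i - x i)) + 2 * (\<Sum>i=1..d. x i * (u i - x i))"
      by (simp add: sum.distrib sum_subtractf sum_distrib_left)
    finally have expand: "(\<Sum>i=1..d. (y i - u i)^2) = \<dots>" .
    have "0 \<le> \<mu> * (g y - g x)^2" using \<open>\<mu> \<ge> 0\<close> by simp
    moreover have "0 \<le> (\<Sum>i=1..d. (y i - x i)^2)" by (simp add: sum_nonneg)
    ultimately show ?thesis
      using expand inner_x inner_le[of y] by (simp add: power2_eq_square algebra_simps)
  qed
  then show ?thesis using \<open>x \<in> vecs d\<close> by (simp add: minimizers_def power2_enorm)
qed

lemma sum_le_prefix_sum_antimono:
  fixes a :: "nat \<Rightarrow> real"
  assumes mono: "\<forall>i j. 1 \<le> i \<longrightarrow> i \<le> j \<longrightarrow> j \<le> d \<longrightarrow> a j \<le> a i"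
    and nonneg: "\<forall>i\<in>{1..d}. 0 \<le> a i"
    and S: "S \<subseteq> {1..d}" "card S \<le> k" and k: "1 \<le> k" "k \<le> d"
  shows "(\<Sum>i\<in>S. a i) \<le> (\<Sum>i=1..k. a i)"
proof -
  define K where "K = {1..k}"
  have fS: "finite S" using S(1) finite_subset by blast
  have fK: "finite K" by (simp add: K_def)
  have "(\<Sum>i\<in>S - K. a i) \<le> of_nat (card (S - K)) * a k"
    by (rule sum_bounded_above) (use mono S(1) k in \<open>auto simp: K_def\<close>)
  also have "\<dots> \<le> of_nat (card (K - S)) * a k"
  proof -
    have "card (S \<inter> K) \<le> card K" by (rule card_mono[OF fK]) auto
    then have "card (S - K) \<le> card (K - S)"
      using S(2) card_Diff_subset_Int[of "S \<inter> K"] fS fK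
      by (simp add: card_Diff_subset_Int K_def Int_commute)
    then show ?thesis using nonneg k by (intro mult_right_mono) auto
  qed
  also have "\<dots> \<le> (\<Sum>i\<in>K - S. a i)"
    by (rule sum_bounded_below) (use mono S(1) k in \<open>auto simp: K_def\<close>)
  finally have "(\<Sum>i\<in>S - K. a i) \<le> (\<Sum>i\<in>K - S. a i)" .
  moreover have "(\<Sum>i\<in>S. a i) = (\<Sum>i\<in>S \<inter> K. a i) + (\<Sum>i\<in>S - K. a i)"
    using sum.Int_Diff[OF fS] by blast
  moreover have "(\<Sum>i\<in>K. a i) = (\<Sum>i\<in>S \<inter> K. a i) + (\<Sum>i\<in>K - S. a i)"
    using sum.Int_Diff[OF fK, of a S] by (simp add: Int_commute)
  ultimately show ?thesis by (simp add: K_def)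
qed

lemma topk_norm_antimono:
  fixes x :: "nat \<Rightarrow> real"
  assumes mono: "\<forall>i j. 1 \<le> i \<longrightarrow> i \<le> j \<longrightarrow> j \<le> d \<longrightarrow> x j \<le> x i"
    and nonneg: "\<forall>i\<in>{1..d}. 0 \<le> x i" and k: "1 \<le> k" "k \<le> d"
  shows "topk_norm d k x = L2_set x {1..k}"
proof (rule antisym)
  obtain S where S: "S \<subseteq> {1..d}" "card S \<le> k" and attained: "topk_norm d k x = L2_set x S"
    by (rule topk_norm_attained)
  have "(\<Sum>i\<in>S. (x i)^2) \<le> (\<Sum>i=1..k. (x i)^2)"
    using mono nonneg by (intro sum_le_prefix_sum_antimono[OF _ _ S k]) (auto intro!: power_mono)
  then show "topk_norm d k x \<le> L2_set x {1..k}"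
    unfolding attained L2_set_def by simp
  show "L2_set x {1..k} \<le> topk_norm d k x"
    using k by (intro L2_set_le_topk_norm) auto
qed

lemma sum_atLeastAtMost_split3:
  fixes f :: "nat \<Rightarrow> 'a::comm_monoid_add"
  assumes "1 \<le> j" "j \<le> e" "e \<le> d"
  shows "(\<Sum>i=1..d. f i) = (\<Sum>i\<in>{1..<j}. f i) + (\<Sum>i=j..e. f i) + (\<Sum>i\<in>{e<..d}. f i)"
proof -
  have "{1..d} = ({1..<j} \<union> {j..e}) \<union> {e<..d}" using assms by auto
  moreover have "({1..<j} \<union> {j..e}) \<inter> {e<..d} = {}" "{1..<j} \<inter> {j..e} = {}"
    using assms by auto
  ultimately show ?thesis by (simp add: sum.union_disjoint)
qed

lemma exists_top_subset:
  fixes a :: "nat \<Rightarrow> real"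
  assumes "finite B" and r: "1 \<le> r" "r \<le> card B"
  obtains S t where "S \<subseteq> B" "card S = r" "\<forall>i\<in>S. t \<le> a i" "\<forall>j\<in>B - S. a j \<le> t"
proof -
  define C where "C = {S. S \<subseteq> B \<and> card S = r}"
  have "finite C" unfolding C_def
    by (rule finite_subset[of _ "Pow B"]) (use \<open>finite B\<close> in auto)
  moreover have "C \<noteq> {}" unfolding C_def
    using obtain_subset_with_card_n[OF r(2)] by blast
  ultimately have "Max (sum a ` C) \<in> sum a ` C" by simp
  then obtain S where "S \<in> C" and "sum a S = Max (sum a ` C)" by auto
  with \<open>finite C\<close> have S_max: "\<And>S'. S' \<in> C \<Longrightarrow> sum a S' \<le> sum a S" by simp
  have SB: "S \<subseteq> B" and cS: "card S = r" using \<open>S \<in> C\<close> by (auto simp: C_def)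
  have fS: "finite S" using SB \<open>finite B\<close> finite_subset by blast
  have "S \<noteq> {}" using cS r(1) by auto
  then have "Min (a ` S) \<in> a ` S" using fS by simp
  then obtain i0 where "i0 \<in> S" "a i0 = Min (a ` S)" by auto
  with fS have i0: "i0 \<in> S" "\<forall>i\<in>S. a i0 \<le> a i" by simp_all
  have "\<forall>j\<in>B - S. a j \<le> a i0"
  proof (rule ccontr)
    assume "\<not> (\<forall>j\<in>B - S. a j \<le> a i0)"
    then obtain j where j: "j \<in> B" "j \<notin> S" "a i0 < a j" by auto
    define S' where "S' = insert j (S - {i0})"
    have "card S' = r" unfolding S'_def using fS j i0 cS \<open>S \<noteq> {}\<close>
      by (simp add: card_Diff_singleton) (metis card_0_eq fS Suc_pred not_gr0)
    then have "S' \<in> C" using SB j unfolding S'_def C_def by auto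
    moreover have "sum a S' = a j + (sum a S - a i0)" unfolding S'_def using fS j i0
      by (simp add: sum_diff1)
    ultimately show False using S_max[of S'] j(3) by simp
  qed
  then show ?thesis using that SB cS i0(2) by blast
qed

lemma weighted_sum_le_top_sum:
  fixes a w :: "nat \<Rightarrow> real"
  assumes "finite B" and SB: "S \<subseteq> B" and cS: "card S = r"
    and w: "\<forall>i\<in>B. 0 \<le> w i \<and> w i \<le> c" and sum_w: "(\<Sum>i\<in>B. w i) = real r * c"
    and top: "\<forall>i\<in>S. t \<le> a i" and rest: "\<forall>j\<in>B - S. a j \<le> t"
  shows "(\<Sum>i\<in>B. w i * a i) \<le> c * (\<Sum>i\<in>S. a i)"
proof -
  have "(\<Sum>i\<in>B. w i * a i) - c * (\<Sum>i\<in>S. a i)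
      = (\<Sum>i\<in>B - S. w i * (a i - t)) - (\<Sum>i\<in>S. (c - w i) * (a i - t))
        + t * ((\<Sum>i\<in>B. w i) - real (card S) * c)"
    using sum.subset_diff[OF SB \<open>finite B\<close>, of w] sum.subset_diff[OF SB \<open>finite B\<close>, of "\<lambda>i. w i * a i"]
    by (simp add: algebra_simps sum_subtractf sum_distrib_left sum_distrib_right sum.distrib)
  also have "\<dots> \<le> 0"
  proof -
    have "(\<Sum>i\<in>B - S. w i * (a i - t)) \<le> 0"
      by (rule sum_nonpos) (use w rest in \<open>auto intro: mult_nonneg_nonpos\<close>)
    moreover have "0 \<le> (\<Sum>i\<in>S. (c - w i) * (a i - t))"
      by (rule sum_nonneg) (use w top SB in auto)
    ultimately show ?thesis using sum_w cS by simp
  qed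
  finally show ?thesis by simp
qed

definition topk_prox_conditions ::
    "nat \<Rightarrow> nat \<Rightarrow> real \<Rightarrow> (nat \<Rightarrow> real) \<Rightarrow> nat \<Rightarrow> nat \<Rightarrow> real \<Rightarrow> bool" where
  "topk_prox_conditions d k \<mu> u js je \<xi> \<longleftrightarrow>
     1 \<le> js \<and> js \<le> k \<and> k \<le> je \<and> je \<le> d \<and> 0 \<le> \<xi> \<and>
     (\<forall>i\<in>{1..<js}. (1 + \<mu>) * \<xi> \<le> u i) \<and>
     (\<forall>i\<in>{js..je}. \<xi> \<le> u i \<and> u i \<le> (1 + \<mu>) * \<xi>) \<and>
     (\<forall>i\<in>{je<..d}. u i \<le> \<xi>) \<and>
     (\<Sum>i=js..je. u i - \<xi>) = \<mu> * real (k + 1 - js) * \<xi>"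

definition topk_prox_point :: "nat \<Rightarrow> real \<Rightarrow> (nat \<Rightarrow> real) \<Rightarrow> nat \<Rightarrow> nat \<Rightarrow> real \<Rightarrow> nat \<Rightarrow> real" where
  "topk_prox_point d \<mu> u js je \<xi> =
     (\<lambda>i. if i \<in> {1..d} then if i < js then u i / (1 + \<mu>) else if i \<le> je then \<xi> else u i else 0)"

context
  fixes d k :: nat and \<mu> \<xi> :: real and u :: "nat \<Rightarrow> real" and js je :: nat
  assumes conds: "topk_prox_conditions d k \<mu> u js je \<xi>"
    and mu: "\<mu> > 0"
    and u_mono: "\<forall>i j. 1 \<le> i \<longrightarrow> i \<le> j \<longrightarrow> j \<le> d \<longrightarrow> u j \<le> u i"
    and u_nonneg: "\<forall>i\<in>{1..d}. 0 \<le> u i"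
begin

private abbreviation "x \<equiv> topk_prox_point d \<mu> u js je \<xi>"

private lemma bounds: "1 \<le> js" "js \<le> k" "k \<le> je" "je \<le> d"
  and xi_nonneg: "0 \<le> \<xi>"
  and head_cond: "\<And>i. i \<in> {1..<js} \<Longrightarrow> (1 + \<mu>) * \<xi> \<le> u i"
  and block_cond: "\<And>i. i \<in> {js..je} \<Longrightarrow> \<xi> \<le> u i \<and> u i \<le> (1 + \<mu>) * \<xi>"
  and tail_cond: "\<And>i. i \<in> {je<..d} \<Longrightarrow> u i \<le> \<xi>"
  and block_sum: "(\<Sum>i=js..je. u i - \<xi>) = \<mu> * real (k + 1 - js) * \<xi>"
  using conds unfolding topk_prox_conditions_def by auto

private lemma point_head: "i \<in> {1..<js} \<Longrightarrow> x i = u i / (1 + \<mu>)"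
  and point_block: "i \<in> {js..je} \<Longrightarrow> x i = \<xi>"
  and point_tail: "i \<in> {je<..d} \<Longrightarrow> x i = u i"
  using bounds by (auto simp: topk_prox_point_def)

private lemma residual_head: "i \<in> {1..<js} \<Longrightarrow> u i - x i = \<mu> * x i"
  using point_head mu by (simp add: field_simps)

private lemma point_nonneg: "\<forall>i\<in>{1..d}. 0 \<le> x i"
  using u_nonneg xi_nonneg mu by (simp add: topk_prox_point_def)

private lemma point_antimono: "\<forall>i j. 1 \<le> i \<longrightarrow> i \<le> j \<longrightarrow> j \<le> d \<longrightarrow> x j \<le> x i"
proof (intro allI impI)
  fix i j :: nat assume ij: "1 \<le> i" "i \<le> j" "j \<le> d"
  have "u j \<le> u i" using u_mono ij by blast
  have head_ge: "\<xi> \<le> x i" if "i < js"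
    using head_cond[of i] ij that mu point_head[of i]
    by (simp add: pos_le_divide_eq mult.commute)
  have tail_le: "x j \<le> \<xi>" if "je < j"
    using tail_cond[of j] ij that point_tail[of j] by simp
  show "x j \<le> x i"
    using ij \<open>u j \<le> u i\<close> head_ge tail_le mu
    by (cases "j < js"; cases "i < js"; cases "j \<le> je"; cases "i \<le> je")
       (auto simp: topk_prox_point_def divide_right_mono)
qed

private lemma topk_norm_point: "topk_norm d k x = L2_set x {1..k}"
  using point_antimono point_nonneg bounds by (intro topk_norm_antimono) auto

private lemma power2_L2_set_point:
  "(L2_set x {1..k})^2 = (\<Sum>i\<in>{1..<js}. (x i)^2) + real (k + 1 - js) * \<xi>^2"
proof -
  have "{1..k} = {1..<js} \<union> {js..k}" using bounds(1-2) by auto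
  then have "(\<Sum>i=1..k. (x i)^2) = (\<Sum>i\<in>{1..<js}. (x i)^2) + (\<Sum>i=js..k. (x i)^2)"
    by (simp add: sum.union_disjoint[symmetric] ivl_disj_int)
  also have "(\<Sum>i=js..k. (x i)^2) = (\<Sum>i=js..k. \<xi>^2)"
    using point_block bounds(3) by (intro sum.cong) auto
  finally show ?thesis by (simp add: power2_L2_set)
qed

private lemma sum_split_blocks:
  "(\<Sum>i=1..d. f i) = (\<Sum>i\<in>{1..<js}. f i) + (\<Sum>i=js..je. f i) + (\<Sum>i\<in>{je<..d}. f i)"
  using bounds by (intro sum_atLeastAtMost_split3) auto

private lemma inner_residual_point: "(\<Sum>i=1..d. x i * (u i - x i)) = \<mu> * (L2_set x {1..k})^2"
proof -
  have "(\<Sum>i\<in>{1..<js}. x i * (u i - x i)) = \<mu> * (\<Sum>i\<in>{1..<js}. (x i)^2)"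
    using residual_head by (simp add: sum_distrib_left power2_eq_square mult.left_commute)
  moreover have "(\<Sum>i=js..je. x i * (u i - x i)) = \<xi> * (\<Sum>i=js..je. u i - \<xi>)"
    using point_block by (simp add: sum_distrib_left)
  moreover have "(\<Sum>i\<in>{je<..d}. x i * (u i - x i)) = 0"
    using point_tail by simp
  ultimately show ?thesis
    unfolding sum_split_blocks[of "\<lambda>i. x i * (u i - x i)"] power2_L2_set_point block_sum
    by (simp add: power2_eq_square algebra_simps)
qed

private lemma head_block_Cauchy_Schwarz:
  assumes S: "S \<subseteq> {js..je}" "card S = k + 1 - js"
  shows "(\<Sum>i\<in>{1..<js}. x i * \<bar>y i\<bar>) + \<xi> * (\<Sum>i\<in>S. \<bar>y i\<bar>) \<le> L2_set x {1..k} * topk_norm d k y"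
proof -
  define h where "h i = (if i < js then x i else \<xi>)" for i
  have disj: "{1..<js} \<inter> S = {}" and fin: "finite S" using S(1) finite_subset by auto
  have h_head: "\<And>i. i \<in> {1..<js} \<Longrightarrow> h i = x i" and h_block: "\<And>i. i \<in> S \<Longrightarrow> h i = \<xi>"
    using S(1) by (auto simp: h_def)
  have "(\<Sum>i\<in>{1..<js}. x i * \<bar>y i\<bar>) + \<xi> * (\<Sum>i\<in>S. \<bar>y i\<bar>) = (\<Sum>i\<in>{1..<js} \<union> S. \<bar>h i\<bar> * \<bar>y i\<bar>)"
    using disj fin point_nonneg bounds(2-4) xi_nonneg h_head h_block
    by (simp add: sum.union_disjoint sum_distrib_left)
  also have "\<dots> \<le> L2_set h ({1..<js} \<union> S) * L2_set y ({1..<js} \<union> S)"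
    by (rule L2_set_mult_ineq)
  also have "L2_set h ({1..<js} \<union> S) = L2_set x {1..k}"
  proof -
    have "(L2_set h ({1..<js} \<union> S))^2 = (L2_set x {1..k})^2"
      unfolding power2_L2_set_point using disj fin S(2) h_head h_block
      by (simp add: power2_L2_set sum.union_disjoint)
    then show ?thesis by (simp add: power2_eq_iff_nonneg)
  qed
  also have "L2_set y ({1..<js} \<union> S) \<le> topk_norm d k y"
  proof (rule L2_set_le_topk_norm)
    show "{1..<js} \<union> S \<subseteq> {1..d}" using S(1) bounds by auto
    show "card ({1..<js} \<union> S) \<le> k"
      using disj fin S(2) bounds(1-2) by (simp add: card_Un_disjoint)
  qed
  finally show ?thesis by (simp add: mult_left_mono)
qed

private lemma inner_residual_le: "(\<Sum>i=1..d. y i * (u i - x i)) \<le> \<mu> * L2_set x {1..k} * topk_norm d k y"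
proof -
  \<comment> \<open>The block residuals lie in [0, mu xi] and sum to (k + 1 - js) mu xi, so they are dominated
    by weight mu xi on the k + 1 - js largest entries of |y| in the block.\<close>
  obtain S t where S: "S \<subseteq> {js..je}" "card S = k + 1 - js"
    and top: "\<forall>i\<in>S. t \<le> \<bar>y i\<bar>" "\<forall>j\<in>{js..je} - S. \<bar>y j\<bar> \<le> t"
    by (rule exists_top_subset[of "{js..je}" "k + 1 - js" "\<lambda>i. \<bar>y i\<bar>"]) (use bounds(1-3) in auto)
  have "(\<Sum>i\<in>{1..<js}. y i * (u i - x i)) \<le> \<mu> * (\<Sum>i\<in>{1..<js}. x i * \<bar>y i\<bar>)"
    unfolding sum_distrib_left
  proof (rule sum_mono)
    fix i assume i: "i \<in> {1..<js}"
    have "0 \<le> \<mu> * x i" using point_nonneg i bounds(2-4) mu by auto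
    then have "y i * (\<mu> * x i) \<le> \<bar>y i\<bar> * (\<mu> * x i)" by (simp add: mult_right_mono)
    then show "y i * (u i - x i) \<le> \<mu> * (x i * \<bar>y i\<bar>)" using residual_head[OF i] by (simp add: ac_simps)
  qed
  moreover have "(\<Sum>i=js..je. y i * (u i - x i)) \<le> \<mu> * \<xi> * (\<Sum>i\<in>S. \<bar>y i\<bar>)"
  proof -
    have "(\<Sum>i=js..je. y i * (u i - x i)) \<le> (\<Sum>i=js..je. (u i - \<xi>) * \<bar>y i\<bar>)"
    proof (rule sum_mono)
      fix i assume i: "i \<in> {js..je}"
      then have "0 \<le> u i - \<xi>" using block_cond by auto
      then show "y i * (u i - x i) \<le> (u i - \<xi>) * \<bar>y i\<bar>"
        using point_block[OF i] by (metis abs_ge_self abs_mult abs_of_nonneg mult.commute)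
    qed
    also have "\<dots> \<le> \<mu> * \<xi> * (\<Sum>i\<in>S. \<bar>y i\<bar>)"
      by (rule weighted_sum_le_top_sum[OF _ S(1,2) _ _ top]) (use block_cond block_sum in \<open>auto simp: algebra_simps\<close>)
    finally show ?thesis .
  qed
  moreover have "(\<Sum>i\<in>{je<..d}. y i * (u i - x i)) = 0"
    using point_tail by simp
  ultimately have "(\<Sum>i=1..d. y i * (u i - x i))
      \<le> \<mu> * ((\<Sum>i\<in>{1..<js}. x i * \<bar>y i\<bar>) + \<xi> * (\<Sum>i\<in>S. \<bar>y i\<bar>))"
    unfolding sum_split_blocks[of "\<lambda>i. y i * (u i - x i)"] by (simp add: algebra_simps)
  also have "\<dots> \<le> \<mu> * L2_set x {1..k} * topk_norm d k y"
    using mult_left_mono[OF head_block_Cauchy_Schwarz[OF S, of y] less_imp_le[OF mu]]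
    by (simp add: mult.assoc)
  finally show ?thesis .
qed

lemma topk_prox_point_minimizer:
  "x \<in> minimizers (\<lambda>z. \<mu> * (topk_norm d k z)^2 + (enorm d (\<lambda>i. z i - u i))^2) (vecs d)"
proof (rule minimizer_of_dual_certificate)
  show "x \<in> vecs d" by (simp add: vecs_def topk_prox_point_def)
qed (use mu inner_residual_point inner_residual_le in \<open>simp_all add: topk_norm_point\<close>)

end


definition capped_excess :: "real \<Rightarrow> real \<Rightarrow> real \<Rightarrow> real" where
  "capped_excess \<mu> t a = max 0 (min (a - t) (\<mu> * t))"

lemma topk_prox_conditions_of_blocks:
  assumes js: "1 \<le> js" "js \<le> k" and je: "k \<le> je" "je \<le> d" and "0 \<le> \<xi>" "0 \<le> \<mu>"
    and head: "\<forall>i\<in>{1..<js}. (1 + \<mu>) * \<xi> \<le> u i"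
    and block: "\<forall>i\<in>{js..je}. \<xi> \<le> u i \<and> u i \<le> (1 + \<mu>) * \<xi>"
    and tail: "\<forall>i\<in>{je<..d}. u i \<le> \<xi>"
    and balance: "(\<Sum>i=1..d. capped_excess \<mu> \<xi> (u i)) = real k * \<mu> * \<xi>"
  shows "topk_prox_conditions d k \<mu> u js je \<xi>"
proof -
  have "(\<Sum>i\<in>{1..<js}. capped_excess \<mu> \<xi> (u i)) = real (js - 1) * (\<mu> * \<xi>)"
  proof -
    have "\<And>i. i \<in> {1..<js} \<Longrightarrow> capped_excess \<mu> \<xi> (u i) = \<mu> * \<xi>"
      using head \<open>0 \<le> \<xi>\<close> \<open>0 \<le> \<mu>\<close> by (force simp: capped_excess_def algebra_simps)
    then show ?thesis by simp
  qed
  moreover have "(\<Sum>i=js..je. capped_excess \<mu> \<xi> (u i)) = (\<Sum>i=js..je. u i - \<xi>)"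
    using block by (intro sum.cong) (auto simp: capped_excess_def algebra_simps)
  moreover have "(\<Sum>i\<in>{je<..d}. capped_excess \<mu> \<xi> (u i)) = 0"
    using tail by (intro sum.neutral) (auto simp: capped_excess_def)
  ultimately have "real (js - 1) * (\<mu> * \<xi>) + (\<Sum>i=js..je. u i - \<xi>) = real k * \<mu> * \<xi>"
    using balance sum_atLeastAtMost_split3[OF js(1) _ je(2), of "\<lambda>i. capped_excess \<mu> \<xi> (u i)"] js je
    by simp
  moreover have "real (k + 1 - js) = real k - real (js - 1)" using js by (simp add: of_nat_diff)
  ultimately have "(\<Sum>i=js..je. u i - \<xi>) = \<mu> * real (k + 1 - js) * \<xi>"
    by (simp add: algebra_simps)
  then show ?thesis
    using assms unfolding topk_prox_conditions_def by blast
qed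

lemma topk_prox_conditions_of_balance:
  assumes mono: "\<forall>i j. 1 \<le> i \<longrightarrow> i \<le> j \<longrightarrow> j \<le> d \<longrightarrow> u j \<le> u i"
    and k: "1 \<le> k" "k \<le> d" and "0 < \<mu>" "0 \<le> \<xi>"
    and kth: "u k \<le> (1 + \<mu>) * \<xi>" "\<xi> \<le> u k"
    and balance: "(\<Sum>i=1..d. capped_excess \<mu> \<xi> (u i)) = real k * \<mu> * \<xi>"
  shows "\<exists>js je. topk_prox_conditions d k \<mu> u js je \<xi>"
proof -
  define J where "J = {i\<in>{1..d}. u i \<le> (1 + \<mu>) * \<xi>}"
  define E where "E = {i\<in>{1..d}. \<xi> \<le> u i}"
  have "k \<in> J" "k \<in> E" "finite J" "finite E" using k kth by (auto simp: J_def E_def)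
  define js where "js = Min J"
  define je where "je = Max E"
  have "js \<in> J" "je \<in> E"
    unfolding js_def je_def using \<open>k \<in> J\<close> \<open>k \<in> E\<close> \<open>finite J\<close> \<open>finite E\<close>
    by (intro Min_in Max_in; blast)+
  moreover have "js \<le> k" "k \<le> je"
    unfolding js_def je_def using \<open>k \<in> J\<close> \<open>k \<in> E\<close> \<open>finite J\<close> \<open>finite E\<close> by simp_all
  ultimately have js: "1 \<le> js" "js \<le> k" and je: "k \<le> je" "je \<le> d"
    and u_js: "u js \<le> (1 + \<mu>) * \<xi>" and u_je: "\<xi> \<le> u je"
    by (auto simp: J_def E_def)
  have "\<forall>i\<in>{1..<js}. (1 + \<mu>) * \<xi> \<le> u i"
  proof
    fix i assume i: "i \<in> {1..<js}"
    have "i \<notin> J"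
    proof
      assume "i \<in> J"
      then have "js \<le> i" using \<open>finite J\<close> by (simp add: js_def)
      with i show False by simp
    qed
    then show "(1 + \<mu>) * \<xi> \<le> u i" using i js k by (auto simp: J_def)
  qed
  moreover have "\<forall>i\<in>{je<..d}. u i \<le> \<xi>"
  proof
    fix i assume i: "i \<in> {je<..d}"
    have "i \<notin> E"
    proof
      assume "i \<in> E"
      then have "i \<le> je" using \<open>finite E\<close> by (simp add: je_def)
      with i show False by simp
    qed
    then show "u i \<le> \<xi>" using i js je by (auto simp: E_def)
  qed
  moreover have "\<forall>i\<in>{js..je}. \<xi> \<le> u i \<and> u i \<le> (1 + \<mu>) * \<xi>"
  proof
    fix i assume "i \<in> {js..je}"
    then have "u je \<le> u i" "u i \<le> u js" using mono js je by auto
    then show "\<xi> \<le> u i \<and> u i \<le> (1 + \<mu>) * \<xi>" using u_js u_je by simp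
  qed
  ultimately have "topk_prox_conditions d k \<mu> u js je \<xi>"
    using topk_prox_conditions_of_blocks[OF js je \<open>0 \<le> \<xi>\<close> _ _ _ _ balance] \<open>0 < \<mu>\<close> by simp
  then show ?thesis by blast
qed

lemma balance_root_le_kth:
  assumes mono: "\<forall>i j. 1 \<le> i \<longrightarrow> i \<le> j \<longrightarrow> j \<le> d \<longrightarrow> u j \<le> u i"
    and k: "1 \<le> k" "k \<le> d" and "0 < \<mu>" "0 < \<xi>"
    and balance: "(\<Sum>i=1..d. capped_excess \<mu> \<xi> (u i)) = real k * \<mu> * \<xi>"
  shows "\<xi> \<le> u k"
proof (rule ccontr)
  assume "\<not> \<xi> \<le> u k"
  have "(\<Sum>i=1..d. capped_excess \<mu> \<xi> (u i))
      = (\<Sum>i\<in>{1..<k}. capped_excess \<mu> \<xi> (u i)) + (\<Sum>i=k..d. capped_excess \<mu> \<xi> (u i))"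
  proof -
    have "{1..d} = {1..<k} \<union> {k..d}" using k by auto
    then show ?thesis by (simp add: sum.union_disjoint[symmetric] ivl_disj_int)
  qed
  also have "(\<Sum>i=k..d. capped_excess \<mu> \<xi> (u i)) = 0"
  proof (intro sum.neutral ballI)
    fix i assume "i \<in> {k..d}"
    then have "u i \<le> u k" using mono k by auto
    then show "capped_excess \<mu> \<xi> (u i) = 0"
      using \<open>\<not> \<xi> \<le> u k\<close> by (simp add: capped_excess_def)
  qed
  also have "(\<Sum>i\<in>{1..<k}. capped_excess \<mu> \<xi> (u i)) \<le> real (card {1..<k}) * (\<mu> * \<xi>)"
    using \<open>0 < \<mu>\<close> \<open>0 < \<xi>\<close> by (intro sum_bounded_above) (simp add: capped_excess_def)
  finally have "real k * (\<mu> * \<xi>) \<le> (real k - 1) * (\<mu> * \<xi>)"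
    using balance k by (simp add: of_nat_diff mult.assoc)
  then show False using mult_pos_pos[OF \<open>0 < \<mu>\<close> \<open>0 < \<xi>\<close>] by (simp add: algebra_simps)
qed




lemma balance_root_exists:
  fixes u :: "nat \<Rightarrow> real"
  assumes mono: "\<forall>i j. 1 \<le> i \<longrightarrow> i \<le> j \<longrightarrow> j \<le> d \<longrightarrow> u j \<le> u i"
    and nonneg: "\<forall>i\<in>{1..d}. 0 \<le> u i" and k: "1 \<le> k" "k \<le> d" and "0 < \<mu>"
  obtains \<xi> where "u k / (1 + \<mu>) \<le> \<xi>" "\<xi> \<le> u k"
    "(\<Sum>i=1..d. capped_excess \<mu> \<xi> (u i)) = real k * \<mu> * \<xi>"
proof (cases "u k = 0")
  case True
  then show ?thesis using that[of 0] by (simp add: capped_excess_def)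
next
  case False
  define \<Phi> where "\<Phi> t = (\<Sum>i=1..d. capped_excess \<mu> t (u i)) - real k * \<mu> * t" for t
  define t0 where "t0 = u k / (1 + \<mu>)"
  have "0 < u k" using False nonneg k by force
  then have "0 < t0" and t0_kth: "u k = (1 + \<mu>) * t0" using \<open>0 < \<mu>\<close> by (simp_all add: t0_def)
  have "u k \<le> u 1" using mono k by auto
  then have "t0 \<le> u 1" using mult_pos_pos[OF \<open>0 < \<mu>\<close> \<open>0 < t0\<close>] t0_kth by (simp add: algebra_simps)
  have "real k * \<mu> * t0 \<le> (\<Sum>i=1..d. capped_excess \<mu> t0 (u i))"
  proof -
    have "\<And>i. i \<in> {1..k} \<Longrightarrow> capped_excess \<mu> t0 (u i) = \<mu> * t0"
      using mono k t0_kth \<open>0 < t0\<close> \<open>0 < \<mu>\<close> by (force simp: capped_excess_def algebra_simps)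
    then have "(\<Sum>i=1..k. capped_excess \<mu> t0 (u i)) = real k * \<mu> * t0" by simp
    moreover have "(\<Sum>i=1..k. capped_excess \<mu> t0 (u i)) \<le> (\<Sum>i=1..d. capped_excess \<mu> t0 (u i))"
      using k by (intro sum_mono2) (auto simp: capped_excess_def)
    ultimately show ?thesis by simp
  qed
  then have "0 \<le> \<Phi> t0" by (simp add: \<Phi>_def)
  have "capped_excess \<mu> (u 1) (u i) = 0" if "i \<in> {1..d}" for i
  proof -
    have "u i \<le> u 1" using mono that by auto
    then show ?thesis by (simp add: capped_excess_def)
  qed
  then have "\<Phi> (u 1) \<le> 0"
    using \<open>0 < t0\<close> \<open>t0 \<le> u 1\<close> \<open>0 < \<mu>\<close> by (simp add: \<Phi>_def)
  moreover have "continuous_on {t0..u 1} \<Phi>"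
    unfolding \<Phi>_def capped_excess_def by (intro continuous_intros)
  ultimately obtain \<xi> where "t0 \<le> \<xi>" "\<Phi> \<xi> = 0"
    using IVT2'[of \<Phi> "u 1" 0 t0] \<open>0 \<le> \<Phi> t0\<close> \<open>t0 \<le> u 1\<close> by auto
  then have balance: "(\<Sum>i=1..d. capped_excess \<mu> \<xi> (u i)) = real k * \<mu> * \<xi>"
    by (simp add: \<Phi>_def)
  have "\<xi> \<le> u k"
    using balance_root_le_kth[OF mono k \<open>0 < \<mu>\<close> _ balance] \<open>0 < t0\<close> \<open>t0 \<le> \<xi>\<close> by simp
  then show ?thesis using that \<open>t0 \<le> \<xi>\<close> balance by (simp add: t0_def)
qed

lemma topk_prox_conditions_exist:
  fixes u :: "nat \<Rightarrow> real"
  assumes mono: "\<forall>i j. 1 \<le> i \<longrightarrow> i \<le> j \<longrightarrow> j \<le> d \<longrightarrow> u j \<le> u i"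
    and nonneg: "\<forall>i\<in>{1..d}. 0 \<le> u i" and k: "1 \<le> k" "k \<le> d" and "0 < \<mu>"
  obtains js je \<xi> where "topk_prox_conditions d k \<mu> u js je \<xi>"
proof -
  obtain \<xi> where "u k / (1 + \<mu>) \<le> \<xi>" "\<xi> \<le> u k"
    and balance: "(\<Sum>i=1..d. capped_excess \<mu> \<xi> (u i)) = real k * \<mu> * \<xi>"
    by (rule balance_root_exists[OF mono nonneg k \<open>0 < \<mu>\<close>])
  have "0 \<le> u k / (1 + \<mu>)" using nonneg k \<open>0 < \<mu>\<close> by auto
  with \<open>u k / (1 + \<mu>) \<le> \<xi>\<close> have "0 \<le> \<xi>" by linarith
  have "u k \<le> (1 + \<mu>) * \<xi>"
    using \<open>u k / (1 + \<mu>) \<le> \<xi>\<close> \<open>0 < \<mu>\<close> by (simp add: pos_divide_le_eq mult.commute)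
  then show ?thesis
    using topk_prox_conditions_of_balance[OF mono k \<open>0 < \<mu>\<close> \<open>0 \<le> \<xi>\<close> _ \<open>\<xi> \<le> u k\<close> balance] that
    by blast
qed


lemma topk_norm_signed_permutation:
  fixes \<sigma> :: "nat \<Rightarrow> nat" and s y :: "nat \<Rightarrow> real"
  assumes bij: "bij_betw \<sigma> {1..d} {1..d}" and s: "\<And>i. (s i)^2 = 1"
  shows "topk_norm d k (\<lambda>i. if i \<in> {1..d} then s i * y (\<sigma> i) else 0) = topk_norm d k y"
proof -
  define z where "z i = (if i \<in> {1..d} then s i * y (\<sigma> i) else 0)" for i
  define adm where "adm = {S \<in> Pow {1..d}. card S \<le> k}"
  have inj: "inj_on \<sigma> S" if "S \<subseteq> {1..d}" for S
    using bij_betw_imp_inj_on[OF bij] that by (rule inj_on_subset)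
  have L2_z: "L2_set z S = L2_set y (\<sigma> ` S)" if "S \<subseteq> {1..d}" for S
  proof -
    have "(\<Sum>i\<in>S. (z i)^2) = (\<Sum>i\<in>S. (y (\<sigma> i))^2)"
      using that s by (intro sum.cong) (auto simp: z_def power_mult_distrib)
    then show ?thesis by (simp add: L2_set_def sum.reindex[OF inj[OF that]])
  qed
  have "image \<sigma> ` adm = adm"
  proof (intro equalityI subsetI)
    fix S' assume "S' \<in> image \<sigma> ` adm"
    then obtain S where "S \<in> adm" "S' = \<sigma> ` S" by auto
    then show "S' \<in> adm"
      using bij_betw_imp_surj_on[OF bij] card_image_le[of S \<sigma>] finite_subset
      by (fastforce simp: adm_def)
  next
    fix S' assume "S' \<in> adm"
    then have "S' \<in> image \<sigma> ` Pow {1..d}"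
      using image_Pow_surj[OF bij_betw_imp_surj_on[OF bij]] by (simp add: adm_def)
    then obtain S where "S \<subseteq> {1..d}" "S' = \<sigma> ` S" by auto
    with \<open>S' \<in> adm\<close> show "S' \<in> image \<sigma> ` adm"
      using card_image[OF inj] by (auto simp: adm_def)
  qed
  have "L2_set z ` adm = (\<lambda>S. L2_set y (\<sigma> ` S)) ` adm"
    using L2_z by (intro image_cong) (auto simp: adm_def)
  also have "\<dots> = L2_set y ` adm"
    using \<open>image \<sigma> ` adm = adm\<close> by (metis image_image)
  finally show ?thesis
    unfolding topk_norm_altdef z_def[symmetric] by (simp add: adm_def Pow_def)
qed



lemma minimizers_cmult:
  fixes F :: "'a \<Rightarrow> real"
  assumes "0 < c"
  shows "minimizers (\<lambda>x. c * F x) A = minimizers F A"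
  using assms by (simp add: minimizers_def)

lemma prox_set_scaled_square:
  "prox_set d (\<lambda>y. \<mu> / 2 * (g y)^2) v
     = minimizers (\<lambda>x. \<mu> * (g x)^2 + (enorm d (\<lambda>i. x i - v i))^2) (vecs d)"
proof -
  have "(\<lambda>y. \<mu> / 2 * (g y)^2 + 1/2 * (enorm d (\<lambda>i. v i - y i))^2)
      = (\<lambda>y. 1/2 * (\<mu> * (g y)^2 + (enorm d (\<lambda>i. y i - v i))^2))"
    by (simp add: fun_eq_iff power2_enorm power2_commute algebra_simps)
  then show ?thesis unfolding prox_set_def by (simp only: minimizers_cmult[of "1/2"])
qed

lemma power2_sign_of: "(sign_of t)^2 = 1"
  by (simp add: sign_of_def)

lemma sign_of_mult_sub_abs: "(sign_of t * y - \<bar>t\<bar>)^2 = (y - t)^2"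
  by (auto simp: sign_of_def power2_eq_square algebra_simps)

lemma topk_objective_signed_permutation:
  fixes \<sigma> :: "nat \<Rightarrow> nat" and u v y :: "nat \<Rightarrow> real"
  assumes bij: "bij_betw \<sigma> {1..d} {1..d}" and uv: "\<forall>i\<in>{1..d}. u i = \<bar>v (\<sigma> i)\<bar>"
  defines "z \<equiv> \<lambda>i. if i \<in> {1..d} then sign_of (v (\<sigma> i)) * y (\<sigma> i) else 0"
  shows "\<mu> * (topk_norm d k z)^2 + (enorm d (\<lambda>i. z i - u i))^2
           = \<mu> * (topk_norm d k y)^2 + (enorm d (\<lambda>i. y i - v i))^2"
proof -
  have "(\<Sum>i=1..d. (z i - u i)^2) = (\<Sum>i=1..d. (y (\<sigma> i) - v (\<sigma> i))^2)"
    using uv sign_of_mult_sub_abs by (intro sum.cong) (auto simp: z_def)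
  also have "\<dots> = (\<Sum>j=1..d. (y j - v j)^2)"
    using sum.reindex_bij_betw[OF bij, of "\<lambda>j. (y j - v j)^2"] by simp
  finally show ?thesis
    using topk_norm_signed_permutation[OF bij, where s = "\<lambda>i. sign_of (v (\<sigma> i))"] power2_sign_of
    by (simp add: power2_enorm z_def)
qed

lemma prox_topk_square_signed_permutation:
  fixes \<mu> :: real and u v xt :: "nat \<Rightarrow> real" and \<sigma> :: "nat \<Rightarrow> nat"
  assumes "0 \<le> \<mu>" and bij: "bij_betw \<sigma> {1..d} {1..d}" and uv: "\<forall>i\<in>{1..d}. u i = \<bar>v (\<sigma> i)\<bar>"
    and xt: "xt \<in> minimizers (\<lambda>x. \<mu> * (topk_norm d k x)^2 + (enorm d (\<lambda>i. x i - u i))^2) (vecs d)"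
  shows "prox_set d (\<lambda>y. \<mu> / 2 * (topk_norm d k y)^2) v =
           {\<lambda>j. if j \<in> {1..d} then sign_of (v j) * xt (the_inv_into {1..d} \<sigma> j) else 0}"
proof -
  define F where "F w x = \<mu> * (topk_norm d k x)^2 + (enorm d (\<lambda>i. x i - w i))^2" for w x
  define \<phi> where "\<phi> y = (\<lambda>i. if i \<in> {1..d} then sign_of (v (\<sigma> i)) * y (\<sigma> i) else 0)" for y
  define ys where "ys j = (if j \<in> {1..d} then sign_of (v j) * xt (the_inv_into {1..d} \<sigma> j) else 0)" for j
  have F_\<phi>: "F u (\<phi> y) = F v y" for y
    unfolding F_def \<phi>_def by (rule topk_objective_signed_permutation[OF bij uv])
  have "\<phi> ys = xt"
  proof
    fix i show "\<phi> ys i = xt i"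
    proof (cases "i \<in> {1..d}")
      case True
      then have "\<sigma> i \<in> {1..d}" "the_inv_into {1..d} \<sigma> (\<sigma> i) = i"
        using bij by (auto simp: bij_betw_def the_inv_into_f_f)
      then show ?thesis
        using True power2_sign_of[of "v (\<sigma> i)"] by (simp add: \<phi>_def ys_def power2_eq_square)
    next
      case False then show ?thesis using xt by (auto simp: \<phi>_def minimizers_def vecs_def)
    qed
  qed
  have "ys \<in> minimizers (F v) (vecs d)"
  proof -
    have "F v ys \<le> F v y" if "y \<in> vecs d" for y
    proof -
      have "\<phi> y \<in> vecs d" by (simp add: vecs_def \<phi>_def)
      then have "F u xt \<le> F u (\<phi> y)" using xt by (simp add: minimizers_def F_def)
      then show ?thesis using F_\<phi> \<open>\<phi> ys = xt\<close> by metis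
    qed
    moreover have "ys \<in> vecs d" by (simp add: vecs_def ys_def)
    ultimately show ?thesis by (simp add: minimizers_def)
  qed
  then have "minimizers (F v) (vecs d) = {ys}"
    using topk_objective_minimizer_unique[OF \<open>0 \<le> \<mu>\<close>] unfolding F_def by blast
  then show ?thesis
    unfolding prox_set_scaled_square ys_def[abs_def] F_def by simp
qed

theorem mainTheorem7:
  fixes d k :: nat and \<mu> :: real and u xt :: "nat \<Rightarrow> real"
  assumes "1 \<le> k" and "k < d" and "\<mu> > 0"
    and "\<forall>i j. 1 \<le> i \<longrightarrow> i \<le> j \<longrightarrow> j \<le> d \<longrightarrow> u j \<le> u i"
    and "u d \<ge> 0"
    and "xt \<in> minimizers (\<lambda>x. \<mu> * (topk_norm d k x)^2 + (enorm d (\<lambda>i. x i - u i))^2) (vecs d)"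
  shows "(\<exists>js\<in>{1..k}. \<exists>je\<in>{k..d}. \<exists>\<xi>.
            (if je = d then 0 else u (je + 1)) \<le> \<xi> \<and>
            (js = 1 \<or> \<xi> \<le> u (js - 1) / (1 + \<mu>)) \<and>
            (\<forall>i\<in>{1..d}. xt i = (if i < js then u i / (1 + \<mu>) else if i \<le> je then \<xi> else u i)))
       \<and> (\<forall>v \<sigma>. bij_betw \<sigma> {1..d} {1..d} \<and> (\<forall>i\<in>{1..d}. u i = \<bar>v (\<sigma> i)\<bar>) \<longrightarrow>
            prox_set d (\<lambda>y. \<mu> / 2 * (topk_norm d k y)^2) v =
              {\<lambda>j. if j \<in> {1..d} then sign_of (v j) * xt (the_inv_into {1..d} \<sigma> j) else 0})"
proof -
  note mono = assms(4) and xt = assms(6)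
  have k: "1 \<le> k" "k \<le> d" using assms(1,2) by simp_all
  have nonneg: "\<forall>i\<in>{1..d}. 0 \<le> u i"
  proof
    fix i assume "i \<in> {1..d}"
    then have "u d \<le> u i" using mono by simp
    then show "0 \<le> u i" using assms(5) by simp
  qed
  obtain js je \<xi> where conds: "topk_prox_conditions d k \<mu> u js je \<xi>"
    using topk_prox_conditions_exist[OF mono nonneg k \<open>\<mu> > 0\<close>] .
  have "xt = topk_prox_point d \<mu> u js je \<xi>"
    using topk_objective_minimizer_unique[OF _ xt topk_prox_point_minimizer[OF conds \<open>\<mu> > 0\<close> mono nonneg]]
      \<open>\<mu> > 0\<close> by simp
  then have "\<forall>i\<in>{1..d}. xt i = (if i < js then u i / (1 + \<mu>) else if i \<le> je then \<xi> else u i)"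
    by (simp add: topk_prox_point_def)
  moreover have "(if je = d then 0 else u (je + 1)) \<le> \<xi>" "js = 1 \<or> \<xi> \<le> u (js - 1) / (1 + \<mu>)"
    using conds \<open>\<mu> > 0\<close> by (auto simp: topk_prox_conditions_def pos_le_divide_eq mult.commute)
  moreover have "js \<in> {1..k}" "je \<in> {k..d}" using conds by (simp_all add: topk_prox_conditions_def)
  moreover have "\<forall>v \<sigma>. bij_betw \<sigma> {1..d} {1..d} \<and> (\<forall>i\<in>{1..d}. u i = \<bar>v (\<sigma> i)\<bar>) \<longrightarrow>
      prox_set d (\<lambda>y. \<mu> / 2 * (topk_norm d k y)^2) v =
        {\<lambda>j. if j \<in> {1..d} then sign_of (v j) * xt (the_inv_into {1..d} \<sigma> j) else 0}"
    using prox_topk_square_signed_permutation[OF less_imp_le[OF \<open>\<mu> > 0\<close>] _ _ xt] by blast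
  ultimately show ?thesis by blast
qed

end
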